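(* Let $T$ be an ergodic probability preserving transformation of a probability space $(X,\mathcal B,m)$, let $G$ be an Abelian locally compact second countable group, and let $\varphi:X\to G$ be measurable with $T_\varphi(x,y)=(Tx,\varphi(x)+y)$ ergodic on $(X\times G,m\times m_G)$. Then there is a surjective semigroup homomorphism $\pi_\varphi:\mathcal L_\varphi\to\mathcal E_\varphi$ such that whenever $Q(x,y)=(Sx,f(x)+w(y))$ (with $S$ a commutor of $T$, $f:X\to G$ measurable, $w$ a surjective continuous endomorphism of $G$) is a commutor of $T_\varphi$, then $w=\pi_\varphi(S)$.
   Context: A commutor of a non-singular transformation $R$ is a non-singular transformation commuting with $R$. $\mathcal L_\varphi$ is the set of commutors $S$ of $T$ for which there exist a surjective continuous group endomorphism $w$ of $G$ and measurable $f:X\to G$ such that $(x,y)\mapsto(Sx,f(x)+w(y))$ is a commutor of $T_\varphi$; $\mathcal E_\varphi$ is the set of all such $w$ (both are semigroups under composition). $m_G$ is Haar measure. *)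

theory Defs
  imports "HOL-Probability.Probability"
begin

definition nonsingular :: "'a measure \<Rightarrow> ('a \<Rightarrow> 'a) \<Rightarrow> bool" where
  "nonsingular M R \<longleftrightarrow> R \<in> M \<rightarrow>\<^sub>M M \<and>
     (\<forall>A \<in> sets M. emeasure M (R -` A \<inter> space M) = 0 \<longleftrightarrow> emeasure M A = 0)"

definition measure_preserving_map :: "'a measure \<Rightarrow> ('a \<Rightarrow> 'a) \<Rightarrow> bool" where
  "measure_preserving_map M R \<longleftrightarrow> R \<in> M \<rightarrow>\<^sub>M M \<and>
     (\<forall>A \<in> sets M. emeasure M (R -` A \<inter> space M) = emeasure M A)"

definition ergodic :: "'a measure \<Rightarrow> ('a \<Rightarrow> 'a) \<Rightarrow> bool" where
  "ergodic M R \<longleftrightarrow> nonsingular M R \<and>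
     (\<forall>A \<in> sets M. R -` A \<inter> space M = A \<longrightarrow>
        emeasure M A = 0 \<or> emeasure M (space M - A) = 0)"

definition commutor :: "'a measure \<Rightarrow> ('a \<Rightarrow> 'a) \<Rightarrow> ('a \<Rightarrow> 'a) \<Rightarrow> bool" where
  "commutor M R S \<longleftrightarrow> nonsingular M S \<and> (AE x in M. S (R x) = R (S x))"

definition haar_measure :: "'g::topological_ab_group_add measure \<Rightarrow> bool" where
  "haar_measure mG \<longleftrightarrow> sets mG = sets borel \<and>
     (\<forall>g. \<forall>A \<in> sets borel. emeasure mG ((\<lambda>y. g + y) ` A) = emeasure mG A) \<and>
     (\<forall>K. compact K \<longrightarrow> emeasure mG K < \<infinity>) \<and>
     (\<forall>U. open U \<and> U \<noteq> {} \<longrightarrow> emeasure mG U > 0)"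

definition surj_cont_endo :: "('g::topological_ab_group_add \<Rightarrow> 'g) \<Rightarrow> bool" where
  "surj_cont_endo w \<longleftrightarrow> surj w \<and> continuous_on UNIV w \<and> (\<forall>x y. w (x + y) = w x + w y)"

definition skew :: "('a \<Rightarrow> 'a) \<Rightarrow> ('a \<Rightarrow> 'g::ab_group_add) \<Rightarrow> 'a \<times> 'g \<Rightarrow> 'a \<times> 'g" where
  "skew T \<phi> = (\<lambda>(x, y). (T x, \<phi> x + y))"

definition lift_map :: "('a \<Rightarrow> 'a) \<Rightarrow> ('a \<Rightarrow> 'g::ab_group_add) \<Rightarrow> ('g \<Rightarrow> 'g) \<Rightarrow> 'a \<times> 'g \<Rightarrow> 'a \<times> 'g" where
  "lift_map S f w = (\<lambda>(x, y). (S x, f x + w y))"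

definition L_set :: "'a measure \<Rightarrow> 'g::topological_ab_group_add measure \<Rightarrow> ('a \<Rightarrow> 'a) \<Rightarrow> ('a \<Rightarrow> 'g) \<Rightarrow> ('a \<Rightarrow> 'a) set" where
  "L_set M mG T \<phi> = {S. commutor M T S \<and> (\<exists>w f. surj_cont_endo w \<and> f \<in> borel_measurable M \<and>
       commutor (M \<Otimes>\<^sub>M mG) (skew T \<phi>) (lift_map S f w))}"

definition E_set :: "'a measure \<Rightarrow> 'g::topological_ab_group_add measure \<Rightarrow> ('a \<Rightarrow> 'a) \<Rightarrow> ('a \<Rightarrow> 'g) \<Rightarrow> ('g \<Rightarrow> 'g) set" where
  "E_set M mG T \<phi> = {w. surj_cont_endo w \<and> (\<exists>S f. commutor M T S \<and> f \<in> borel_measurable M \<and>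
       commutor (M \<Otimes>\<^sub>M mG) (skew T \<phi>) (lift_map S f w))}"

end

theory Submission
  imports Defs
begin

text \<open>If \<open>Q\<^sub>i(x, y) = (S x, f\<^sub>i x + w\<^sub>i y)\<close>, \<open>i = 1, 2\<close>, both commute with \<open>T\<^sub>\<phi>\<close>, then
  \<open>F(x, y) = (f\<^sub>1 x - f\<^sub>2 x) + (w\<^sub>1 y - w\<^sub>2 y)\<close> is \<open>T\<^sub>\<phi>\<close>-invariant, hence a.e. constant by
  ergodicity of \<open>T\<^sub>\<phi>\<close>. By Fubini, for some fixed x the continuous map \<open>w\<^sub>1 - w\<^sub>2\<close> is then
  Haar-a.e. constant, hence constant because Haar measure charges nonempty open sets, and it
  vanishes at 0. So S determines w, which defines \<open>\<pi>\<^sub>\<phi>\<close>; it is multiplicative because the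
  composition of two such lifts of \<open>S\<^sub>1\<close> and \<open>S\<^sub>2\<close> is a lift of \<open>S\<^sub>1 \<circ> S\<^sub>2\<close> with fibre map
  \<open>w\<^sub>1 \<circ> w\<^sub>2\<close>.\<close>

lemma AE_nonsingular_pullback:
  assumes ns: "nonsingular N R" and ae: "AE z in N. P z"
  shows "AE z in N. P (R z)"
proof -
  from ae obtain Z where Z: "{z\<in>space N. \<not> P z} \<subseteq> Z" "Z \<in> null_sets N"
    by (auto elim!: AE_E)
  have R: "R \<in> N \<rightarrow>\<^sub>M N" using ns by (simp add: nonsingular_def)
  have "R -` Z \<inter> space N \<in> null_sets N"
    using ns Z(2) R by (simp add: nonsingular_def null_sets_def measurable_sets)
  moreover have "{z\<in>space N. \<not> P (R z)} \<subseteq> R -` Z \<inter> space N"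
    using Z(1) R by (auto dest: measurable_space)
  ultimately show ?thesis by (rule AE_I')
qed

lemma nonsingular_id: "nonsingular N id"
  by (simp add: nonsingular_def)

lemma nonsingular_comp:
  assumes n1: "nonsingular N Q1" and n2: "nonsingular N Q2"
  shows "nonsingular N (Q1 \<circ> Q2)"
proof -
  have m1: "Q1 \<in> N \<rightarrow>\<^sub>M N" and m2: "Q2 \<in> N \<rightarrow>\<^sub>M N"
    using n1 n2 by (auto simp: nonsingular_def)
  have "emeasure N ((Q1 \<circ> Q2) -` A \<inter> space N) = 0 \<longleftrightarrow> emeasure N A = 0"
    if A: "A \<in> sets N" for A
  proof -
    have "Q1 -` A \<inter> space N \<in> sets N" using m1 A by (simp add: measurable_sets)
    moreover have "(Q1 \<circ> Q2) -` A \<inter> space N = Q2 -` (Q1 -` A \<inter> space N) \<inter> space N"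
      using m2 by (auto dest: measurable_space)
    ultimately show ?thesis using n1 n2 A unfolding nonsingular_def by presburger
  qed
  then show ?thesis using m1 m2 by (simp add: nonsingular_def measurable_comp)
qed

lemma nonsingular_funpow: "nonsingular N R \<Longrightarrow> nonsingular N (R ^^ n)"
  by (induction n) (simp_all add: nonsingular_id nonsingular_comp)

lemma commutor_comp:
  assumes c1: "commutor N R Q1" and c2: "commutor N R Q2"
  shows "commutor N R (Q1 \<circ> Q2)"
proof -
  have "AE z in N. Q1 (R (Q2 z)) = R (Q1 (Q2 z))"
    using AE_nonsingular_pullback[of N Q2 "\<lambda>z. Q1 (R z) = R (Q1 z)"] c1 c2
    by (simp add: commutor_def)
  moreover have "AE z in N. Q2 (R z) = R (Q2 z)" using c2 by (simp add: commutor_def)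
  ultimately have "AE z in N. (Q1 \<circ> Q2) (R z) = R ((Q1 \<circ> Q2) z)" by eventually_elim simp
  then show ?thesis using c1 c2 nonsingular_comp by (auto simp: commutor_def)
qed

lemma AE_nonsingular_invariant_funpow:
  assumes ns: "nonsingular N R" and inv: "AE z in N. R z \<in> A \<longleftrightarrow> z \<in> A"
  shows "AE z in N. \<forall>n. (R ^^ n) z \<in> A \<longleftrightarrow> z \<in> A"
proof -
  have step: "AE z in N. R ((R ^^ n) z) \<in> A \<longleftrightarrow> (R ^^ n) z \<in> A" for n
    using nonsingular_funpow[OF ns] inv by (rule AE_nonsingular_pullback)
  have "AE z in N. (R ^^ n) z \<in> A \<longleftrightarrow> z \<in> A" for n
  proof (induction n)
    case (Suc n)
    with step[of n] show ?case by eventually_elim simp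
  qed simp
  then show ?thesis by (simp add: AE_all_countable)
qed

lemma ergodic_AE_invariant_set:
  assumes erg: "ergodic N R" and A: "A \<in> sets N"
    and inv: "AE z in N. R z \<in> A \<longleftrightarrow> z \<in> A"
  shows "(AE z in N. z \<in> A) \<or> (AE z in N. z \<notin> A)"
proof -
  have ns: "nonsingular N R" using erg by (simp add: ergodic_def)
  have R: "R \<in> N \<rightarrow>\<^sub>M N" using ns by (simp add: nonsingular_def)
  \<comment> \<open>The set of points visiting A infinitely often is invariant everywhere, not only mod 0.\<close>
  define A' where "A' = limsup (\<lambda>n. (R ^^ n) -` A \<inter> space N)"
  have A'_iff: "z \<in> A' \<longleftrightarrow> z \<in> space N \<and> (\<exists>\<^sub>F n in sequentially. (R ^^ n) z \<in> A)" for z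
    by (auto simp: A'_def mem_limsup_iff frequently_def dest: eventually_happens')
  have A'_sets: "A' \<in> sets N"
    unfolding A'_def using A measurable_compose_n[OF R] by (intro measurable_limsup measurable_sets)
  have frequently_shift: "(\<exists>\<^sub>F n in sequentially. (R ^^ n) (R z) \<in> A) \<longleftrightarrow>
      (\<exists>\<^sub>F n in sequentially. (R ^^ n) z \<in> A)" for z
  proof -
    have "(R ^^ n) (R z) = (R ^^ Suc n) z" for n by (simp add: funpow_Suc_right del: funpow.simps)
    then show ?thesis
      using eventually_sequentially_Suc[of "\<lambda>n. (R ^^ n) z \<notin> A"]
      by (simp add: frequently_def del: funpow.simps eventually_sequentially_Suc)
  qed
  have "R -` A' \<inter> space N = A'"
    using measurable_space[OF R] by (auto simp: A'_iff frequently_shift)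
  then have A'_trivial: "emeasure N A' = 0 \<or> emeasure N (space N - A') = 0"
    using erg A'_sets by (simp add: ergodic_def)
  have "AE z in N. \<forall>n. (R ^^ n) z \<in> A \<longleftrightarrow> z \<in> A"
    using ns inv by (rule AE_nonsingular_invariant_funpow)
  then have same: "AE z in N. z \<in> A' \<longleftrightarrow> z \<in> A"
    using AE_space by eventually_elim (simp add: A'_iff)
  from A'_trivial show ?thesis
  proof
    assume "emeasure N A' = 0"
    then have "AE z in N. z \<notin> A'" using A'_sets by (intro AE_not_in) (simp add: null_sets_def)
    with same have "AE z in N. z \<notin> A" by eventually_elim simp
    then show ?thesis ..
  next
    assume "emeasure N (space N - A') = 0"
    then have "AE z in N. z \<notin> space N - A'" using A'_sets by (intro AE_not_in) (auto simp: null_sets_def)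
    with same AE_space have "AE z in N. z \<in> A" by eventually_elim auto
    then show ?thesis ..
  qed
qed

lemma AE_imp_ex_in_space:
  assumes "AE z in N. P z" and "emeasure N (space N) \<noteq> 0"
  shows "\<exists>z\<in>space N. P z"
  using eventually_happens'[OF _ AE_conjI[OF AE_space assms(1)]] assms(2)
  by (auto simp: ae_filter_eq_bot_iff)

lemma topological_basis_separates_points:
  fixes a b :: "'a::t1_space"
  assumes B: "topological_basis B" and same: "\<forall>U\<in>B. a \<in> U \<longleftrightarrow> b \<in> U"
  shows "a = b"
proof (rule ccontr)
  assume "a \<noteq> b"
  then obtain U where "open U" "a \<in> U" "b \<notin> U" by (meson separation_t1)
  then obtain V where "V \<in> B" "a \<in> V" "V \<subseteq> U" using B by (meson topological_basisE)
  with same \<open>b \<notin> U\<close> show False by blast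
qed

lemma ergodic_AE_invariant_function_const:
  fixes F :: "'b \<Rightarrow> 'c::{second_countable_topology, t1_space}"
  assumes erg: "ergodic N R" and F: "F \<in> borel_measurable N"
    and inv: "AE z in N. F (R z) = F z" and pos: "emeasure N (space N) \<noteq> 0"
  shows "\<exists>c. AE z in N. F z = c"
proof -
  have R: "R \<in> N \<rightarrow>\<^sub>M N" using erg by (simp add: ergodic_def nonsingular_def)
  have trivial: "(AE z in N. F z \<in> U) \<or> (AE z in N. F z \<notin> U)" if "open U" for U
  proof -
    have U: "F -` U \<inter> space N \<in> sets N" using F \<open>open U\<close> by (simp add: measurable_sets)
    have "AE z in N. R z \<in> F -` U \<inter> space N \<longleftrightarrow> z \<in> F -` U \<inter> space N"
      using inv AE_space by eventually_elim (auto dest: measurable_space[OF R])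
    from ergodic_AE_invariant_set[OF erg U this] show ?thesis
      by (auto elim!: eventually_mono)
  qed
  obtain B :: "'c set set" where B: "countable B" "topological_basis B"
    using ex_countable_basis by blast
  have "AE z in N. \<forall>U\<in>B. F z \<in> U \<longleftrightarrow> (AE z' in N. F z' \<in> U)"
  proof (subst AE_ball_countable[OF B(1)], intro ballI)
    fix U assume "U \<in> B"
    then have "open U" using B(2) topological_basis_open by blast
    show "AE z in N. F z \<in> U \<longleftrightarrow> (AE z' in N. F z' \<in> U)"
    proof (cases "AE z' in N. F z' \<in> U")
      case True
      show ?thesis by (rule eventually_mono[OF True]) (simp add: True)
    next
      case False
      with trivial[OF \<open>open U\<close>] have "AE z in N. F z \<notin> U" by blast
      then show ?thesis by (rule eventually_mono) (simp add: False)
    qed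
  qed
  moreover from this obtain z0 where "\<forall>U\<in>B. F z0 \<in> U \<longleftrightarrow> (AE z' in N. F z' \<in> U)"
    using AE_imp_ex_in_space pos by blast
  ultimately have "AE z in N. F z = F z0"
    by (auto elim!: eventually_mono intro: topological_basis_separates_points[OF B(2)])
  then show ?thesis ..
qed

lemma haar_measure_space: "haar_measure mG \<Longrightarrow> space mG = UNIV"
  by (metis haar_measure_def sets_eq_imp_space_eq space_borel)

lemma haar_measure_space_neq_0: "haar_measure mG \<Longrightarrow> emeasure mG (space mG) \<noteq> 0"
  using open_UNIV UNIV_not_empty by (fastforce simp: haar_measure_def haar_measure_space)

lemma sigma_finite_haar_measure:
  fixes mG :: "'g::{topological_ab_group_add, second_countable_topology, t2_space} measure"
  assumes lc: "locally_compact_space (euclidean :: 'g topology)" and H: "haar_measure mG"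
  shows "sigma_finite_measure mG"
proof
  have sets: "sets mG = sets borel" using H by (simp add: haar_measure_def)
  obtain B :: "'g set set" where B: "countable B" "topological_basis B"
    using ex_countable_basis by blast
  define C where "C = {U\<in>B. \<exists>K. compact K \<and> U \<subseteq> K}"
  have "countable C" using B(1) unfolding C_def by simp
  moreover have "C \<subseteq> sets mG"
    unfolding C_def sets by (auto intro!: borel_open topological_basis_open[OF B(2)])
  moreover have "\<Union>C = space mG"
  proof -
    have "x \<in> \<Union>C" for x
    proof -
      have "\<exists>U K. open U \<and> compact K \<and> x \<in> U \<and> U \<subseteq> K"
        using lc unfolding locally_compact_space_def by simp
      then obtain U K where "open U" "compact K" "x \<in> U" "U \<subseteq> K" by blast
      moreover from this obtain V where "V \<in> B" "x \<in> V" "V \<subseteq> U"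
        using B(2) by (meson topological_basisE)
      ultimately show ?thesis unfolding C_def by blast
    qed
    then show ?thesis using haar_measure_space[OF H] by auto
  qed
  moreover have "emeasure mG U \<noteq> \<infinity>" if "U \<in> C" for U
  proof -
    obtain K where K: "compact K" "U \<subseteq> K" using \<open>U \<in> C\<close> unfolding C_def by blast
    then have "emeasure mG U \<le> emeasure mG K"
      by (intro emeasure_mono) (simp_all add: sets borel_closed[OF compact_imp_closed])
    also have "\<dots> < \<infinity>" using H K(1) by (simp add: haar_measure_def)
    finally show ?thesis by simp
  qed
  ultimately show "\<exists>A. countable A \<and> A \<subseteq> sets mG \<and> \<Union>A = space mG \<and> (\<forall>a\<in>A. emeasure mG a \<noteq> \<infinity>)"
    by (intro exI[of _ C]) simp
qed

lemma haar_measure_AE_eq_imp_eq: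
  fixes f g :: "'g::topological_ab_group_add \<Rightarrow> 'c::t2_space"
  assumes H: "haar_measure mG" and "continuous_on UNIV f" "continuous_on UNIV g"
    and ae: "AE y in mG. f y = g y"
  shows "f = g"
proof -
  define D where "D = {y. f y \<noteq> g y}"
  have "open D" unfolding D_def using assms(2,3) by (rule open_Collect_neq)
  then have D: "D \<in> sets mG" using H by (simp add: haar_measure_def)
  have "emeasure mG D = 0"
    using ae AE_iff_measurable[OF D] by (simp add: D_def haar_measure_space[OF H])
  with H \<open>open D\<close> have "D = {}" unfolding haar_measure_def by force
  then show ?thesis by (auto simp: D_def)
qed

lemma borel_measurable_diff_topological_group[measurable (raw)]:
  fixes f g :: "'a \<Rightarrow> 'b::{second_countable_topology, topological_group_add}"
  assumes "f \<in> borel_measurable M" and "g \<in> borel_measurable M"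
  shows "(\<lambda>x. f x - g x) \<in> borel_measurable M"
  using assms by (rule borel_measurable_continuous_Pair) (intro continuous_intros)

lemma lift_map_difference_skew_invariant:
  fixes \<phi> :: "'a \<Rightarrow> 'g::ab_group_add"
  assumes "lift_map S f1 w1 (skew T \<phi> (x, y)) = skew T \<phi> (lift_map S f1 w1 (x, y))"
    and "lift_map S f2 w2 (skew T \<phi> (x, y)) = skew T \<phi> (lift_map S f2 w2 (x, y))"
  shows "(f1 (T x) - f2 (T x)) + (w1 (\<phi> x + y) - w2 (\<phi> x + y)) = (f1 x - f2 x) + (w1 y - w2 y)"
proof -
  have e1: "f1 (T x) + w1 (\<phi> x + y) = \<phi> (S x) + (f1 x + w1 y)"
    and e2: "f2 (T x) + w2 (\<phi> x + y) = \<phi> (S x) + (f2 x + w2 y)"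
    using assms by (simp_all add: lift_map_def skew_def)
  have "(f1 (T x) - f2 (T x)) + (w1 (\<phi> x + y) - w2 (\<phi> x + y))
      = (f1 (T x) + w1 (\<phi> x + y)) - (f2 (T x) + w2 (\<phi> x + y))"
    by (simp add: algebra_simps)
  also have "\<dots> = (\<phi> (S x) + (f1 x + w1 y)) - (\<phi> (S x) + (f2 x + w2 y))"
    by (simp only: e1 e2)
  also have "\<dots> = (f1 x - f2 x) + (w1 y - w2 y)"
    by (simp add: algebra_simps)
  finally show ?thesis .
qed

lemma commutor_lift_maps_fibre_diff_const:
  fixes M :: "'a measure"
    and mG :: "'g::{topological_ab_group_add, second_countable_topology, t2_space} measure"
  assumes M: "sigma_finite_measure M" "emeasure M (space M) \<noteq> 0"
    and G: "sigma_finite_measure mG" "haar_measure mG"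
    and erg: "ergodic (M \<Otimes>\<^sub>M mG) (skew T \<phi>)"
    and f: "f1 \<in> borel_measurable M" "f2 \<in> borel_measurable M"
    and w: "continuous_on UNIV w1" "continuous_on UNIV w2"
    and c1: "commutor (M \<Otimes>\<^sub>M mG) (skew T \<phi>) (lift_map S f1 w1)"
    and c2: "commutor (M \<Otimes>\<^sub>M mG) (skew T \<phi>) (lift_map S f2 w2)"
  shows "\<exists>d. \<forall>y. w1 y - w2 y = d"
proof -
  interpret M: sigma_finite_measure M by (rule M(1))
  interpret pair_sigma_finite M mG using G(1) by (intro pair_sigma_finite.intro M(1))
  have sets: "sets mG = sets borel" using G(2) by (simp add: haar_measure_def)
  have [measurable]: "w1 \<in> borel_measurable mG" "w2 \<in> borel_measurable mG"
    using w by (simp_all add: measurable_cong_sets[OF sets refl] borel_measurable_continuous_onI)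
  note [measurable] = f
  define F where "F z = (f1 (fst z) - f2 (fst z)) + (w1 (snd z) - w2 (snd z))" for z
  have "F \<in> borel_measurable (M \<Otimes>\<^sub>M mG)" unfolding F_def by measurable
  moreover have "AE z in M \<Otimes>\<^sub>M mG. lift_map S f1 w1 (skew T \<phi> z) = skew T \<phi> (lift_map S f1 w1 z)"
    "AE z in M \<Otimes>\<^sub>M mG. lift_map S f2 w2 (skew T \<phi> z) = skew T \<phi> (lift_map S f2 w2 z)"
    using c1 c2 by (simp_all add: commutor_def)
  then have "AE z in M \<Otimes>\<^sub>M mG. F (skew T \<phi> z) = F z"
  proof eventually_elim
    case (elim z)
    then show ?case by (cases z) (simp add: F_def skew_def lift_map_difference_skew_invariant)
  qed
  moreover have "emeasure (M \<Otimes>\<^sub>M mG) (space (M \<Otimes>\<^sub>M mG)) \<noteq> 0"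
    using M(2) haar_measure_space_neq_0[OF G(2)]
    by (simp add: space_pair_measure M2.emeasure_pair_measure_Times)
  ultimately obtain c where "AE z in M \<Otimes>\<^sub>M mG. F z = c"
    using ergodic_AE_invariant_function_const[OF erg] by blast
  then have "AE x in M. AE y in mG. F (x, y) = c" by (rule AE_pair)
  then obtain x0 where "AE y in mG. F (x0, y) = c"
    using AE_imp_ex_in_space M(2) by blast
  then have "AE y in mG. w1 y - w2 y = c - (f1 x0 - f2 x0)"
    by (rule eventually_mono) (auto simp: F_def algebra_simps)
  then have "(\<lambda>y. w1 y - w2 y) = (\<lambda>y. c - (f1 x0 - f2 x0))"
    by (rule haar_measure_AE_eq_imp_eq[OF G(2) continuous_on_diff[OF w] continuous_on_const])
  then show ?thesis by metis
qed

text \<open>The graph of \<open>\<pi>\<^sub>\<phi>\<close>: for \<open>S \<in> L_set M mG T \<phi>\<close>, \<open>lift_endo M mG T \<phi> S w\<close> holds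
  exactly for \<open>w = \<pi>\<^sub>\<phi> S\<close>.\<close>

definition lift_endo ::
    "'a measure \<Rightarrow> 'g::topological_ab_group_add measure \<Rightarrow> ('a \<Rightarrow> 'a) \<Rightarrow> ('a \<Rightarrow> 'g) \<Rightarrow>
      ('a \<Rightarrow> 'a) \<Rightarrow> ('g \<Rightarrow> 'g) \<Rightarrow> bool" where
  "lift_endo M mG T \<phi> S w \<longleftrightarrow> surj_cont_endo w \<and>
     (\<exists>f \<in> borel_measurable M. commutor (M \<Otimes>\<^sub>M mG) (skew T \<phi>) (lift_map S f w))"

lemma L_set_eq: "L_set M mG T \<phi> = {S. commutor M T S \<and> (\<exists>w. lift_endo M mG T \<phi> S w)}"
  by (auto simp: L_set_def lift_endo_def)

lemma E_set_eq: "E_set M mG T \<phi> = {w. \<exists>S. commutor M T S \<and> lift_endo M mG T \<phi> S w}"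
  by (auto simp: E_set_def lift_endo_def)

lemma lift_endo_unique:
  fixes mG :: "'g::{topological_ab_group_add, second_countable_topology, t2_space} measure"
  assumes "prob_space M" and "locally_compact_space (euclidean :: 'g topology)"
    and "haar_measure mG" and "ergodic (M \<Otimes>\<^sub>M mG) (skew T \<phi>)"
    and w1: "lift_endo M mG T \<phi> S w1" and w2: "lift_endo M mG T \<phi> S w2"
  shows "w1 = w2"
proof -
  obtain f1 f2 where "f1 \<in> borel_measurable M" "f2 \<in> borel_measurable M"
    "commutor (M \<Otimes>\<^sub>M mG) (skew T \<phi>) (lift_map S f1 w1)"
    "commutor (M \<Otimes>\<^sub>M mG) (skew T \<phi>) (lift_map S f2 w2)"
    using w1 w2 by (auto simp: lift_endo_def)
  moreover have "sigma_finite_measure M" "emeasure M (space M) \<noteq> 0"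
    using \<open>prob_space M\<close> by (simp_all add: prob_space_imp_sigma_finite prob_space.emeasure_space_1)
  moreover have "sigma_finite_measure mG" using assms(2,3) by (rule sigma_finite_haar_measure)
  ultimately obtain d where d: "\<And>y. w1 y - w2 y = d"
    using commutor_lift_maps_fibre_diff_const[OF _ _ _ assms(3,4)] w1 w2
    by (metis lift_endo_def surj_cont_endo_def)
  have "w1 0 = 0" "w2 0 = 0"
    using w1 w2 unfolding lift_endo_def surj_cont_endo_def by (metis add_cancel_right_right add_0)+
  with d have "d = 0" by (metis diff_self)
  with d show ?thesis by (simp add: fun_eq_iff)
qed

lemma surj_cont_endo_comp:
  assumes "surj_cont_endo w1" and "surj_cont_endo w2"
  shows "surj_cont_endo (w1 \<circ> w2)"
proof -
  have "surj (w1 \<circ> w2)" using assms comp_surj unfolding surj_cont_endo_def by metis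
  moreover have "continuous_on UNIV (w1 \<circ> w2)"
    using assms continuous_on_compose unfolding surj_cont_endo_def by metis
  ultimately show ?thesis using assms by (simp add: surj_cont_endo_def)
qed

lemma lift_map_comp:
  assumes "\<And>x y. w1 (x + y) = w1 x + w1 y"
  shows "lift_map S1 f1 w1 \<circ> lift_map S2 f2 w2
    = lift_map (S1 \<circ> S2) (\<lambda>x. f1 (S2 x) + w1 (f2 x)) (w1 \<circ> w2)"
  by (auto simp: lift_map_def assms add.assoc)

lemma lift_endo_comp:
  fixes mG :: "'g::{topological_ab_group_add, second_countable_topology} measure"
  assumes w1: "lift_endo M mG T \<phi> S1 w1" and w2: "lift_endo M mG T \<phi> S2 w2"
    and S2: "S2 \<in> M \<rightarrow>\<^sub>M M"
  shows "lift_endo M mG T \<phi> (S1 \<circ> S2) (w1 \<circ> w2)"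
proof -
  obtain f1 f2 where f: "f1 \<in> borel_measurable M" "f2 \<in> borel_measurable M"
    and c: "commutor (M \<Otimes>\<^sub>M mG) (skew T \<phi>) (lift_map S1 f1 w1)"
      "commutor (M \<Otimes>\<^sub>M mG) (skew T \<phi>) (lift_map S2 f2 w2)"
    using w1 w2 by (auto simp: lift_endo_def)
  have sce: "surj_cont_endo w1" "surj_cont_endo w2" using w1 w2 by (simp_all add: lift_endo_def)
  then have "w1 \<in> borel_measurable borel"
    by (simp add: surj_cont_endo_def borel_measurable_continuous_onI)
  then have "(\<lambda>x. f1 (S2 x) + w1 (f2 x)) \<in> borel_measurable M" using f S2 by measurable
  moreover have "commutor (M \<Otimes>\<^sub>M mG) (skew T \<phi>)
      (lift_map (S1 \<circ> S2) (\<lambda>x. f1 (S2 x) + w1 (f2 x)) (w1 \<circ> w2))"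
    using commutor_comp[OF c] sce(1) by (simp add: lift_map_comp surj_cont_endo_def)
  ultimately show ?thesis
    using surj_cont_endo_comp[OF sce] by (auto simp: lift_endo_def)
qed

theorem mainTheorem6:
  fixes M :: "'a measure" and T :: "'a \<Rightarrow> 'a"
    and mG :: "'g::{topological_ab_group_add, second_countable_topology, t2_space} measure"
    and \<phi> :: "'a \<Rightarrow> 'g"
  assumes "prob_space M"
    and "measure_preserving_map M T" and "ergodic M T"
    and "locally_compact_space (euclidean :: 'g topology)"
    and "haar_measure mG"
    and "\<phi> \<in> borel_measurable M"
    and "ergodic (M \<Otimes>\<^sub>M mG) (skew T \<phi>)"
  shows "\<exists>\<pi>. (\<forall>S \<in> L_set M mG T \<phi>. \<pi> S \<in> E_set M mG T \<phi>)
           \<and> \<pi> ` L_set M mG T \<phi> = E_set M mG T \<phi>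
           \<and> (\<forall>S1 \<in> L_set M mG T \<phi>. \<forall>S2 \<in> L_set M mG T \<phi>. \<pi> (S1 \<circ> S2) = \<pi> S1 \<circ> \<pi> S2)
           \<and> (\<forall>S f w. commutor M T S \<and> f \<in> borel_measurable M \<and> surj_cont_endo w \<and>
                 commutor (M \<Otimes>\<^sub>M mG) (skew T \<phi>) (lift_map S f w) \<longrightarrow> w = \<pi> S)"
proof -
  let ?lift = "lift_endo M mG T \<phi>"
  define \<pi> where "\<pi> S = (SOME w. ?lift S w)" for S
  have \<pi>_eq: "\<pi> S = w" if "?lift S w" for S w
    using lift_endo_unique[OF assms(1,4,5,7) someI[of "?lift S", OF that] that]
    by (simp add: \<pi>_def)
  have "\<pi> (S1 \<circ> S2) = \<pi> S1 \<circ> \<pi> S2"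
    if S: "S1 \<in> L_set M mG T \<phi>" "S2 \<in> L_set M mG T \<phi>" for S1 S2
  proof -
    obtain w1 w2 where "?lift S1 w1" "?lift S2 w2" and "commutor M T S2"
      using S unfolding L_set_eq by blast
    moreover from \<open>commutor M T S2\<close> have "S2 \<in> M \<rightarrow>\<^sub>M M"
      by (simp add: commutor_def nonsingular_def)
    ultimately show ?thesis by (simp add: \<pi>_eq lift_endo_comp)
  qed
  moreover have "\<pi> ` L_set M mG T \<phi> = E_set M mG T \<phi>"
  proof
    show "\<pi> ` L_set M mG T \<phi> \<subseteq> E_set M mG T \<phi>"
      using \<pi>_eq by (auto simp: L_set_eq E_set_eq)
    show "E_set M mG T \<phi> \<subseteq> \<pi> ` L_set M mG T \<phi>"
      using \<pi>_eq by (force simp: L_set_eq E_set_eq)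
  qed
  moreover have "w = \<pi> S" if "surj_cont_endo w" "f \<in> borel_measurable M"
    "commutor (M \<Otimes>\<^sub>M mG) (skew T \<phi>) (lift_map S f w)" for S f w
    using that \<pi>_eq by (auto simp: lift_endo_def)
  ultimately show ?thesis by blast
qed

end
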